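(* Let $D$ be a strong digraph with $D\in\mathcal{LE}_2$. Then $\chi(D)\leq 3$.
   Context: All digraphs are finite, without loops or multiple arcs. Paths and cycles are directed; the length of a path or cycle is its number of arcs. The chromatic number $\chi(D)$ is the least $k$ such that the vertices of $D$ can be coloured with $k$ colours so that any two vertices joined by an arc (in either direction) get different colours. A digraph is strong if for every ordered pair of vertices $x,y$ there is a directed path from $x$ to $y$. For a subdigraph $H$ of a digraph $D$, an ear of $H$ in $D$ is either a directed path in $D$ whose two end vertices lie in $H$ and whose internal vertices do not lie in $H$, or a directed cycle in $D$ having exactly one vertex in $H$. An ear decomposition of a strong digraph $D$ is a sequence $(D_0,D_1,\ldots,D_k)$ of strong subdigraphs of $D$ such that $D_0$ is a directed cycle, $D_{j+1}=D_j\cup P_j$ where $P_j$ is an ear of $D_j$ in $D$ for every $j\in\{0,\ldots,k-1\}$, and $D_k=D$. For an integer $i\geq 1$, $\mathcal{LE}_i$ denotes the family of strong digraphs having an ear decomposition in which every ear has length at least $i$. *)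

theory Defs
  imports Main
begin

definition digraph :: "'a set \<Rightarrow> ('a \<times> 'a) set \<Rightarrow> bool" where
  "digraph V A \<longleftrightarrow> finite V \<and> A \<subseteq> V \<times> V \<and> (\<forall>x. (x, x) \<notin> A)"

definition strong :: "'a set \<Rightarrow> ('a \<times> 'a) set \<Rightarrow> bool" where
  "strong V A \<longleftrightarrow> (\<forall>x\<in>V. \<forall>y\<in>V. (x, y) \<in> A\<^sup>*)"

definition path_arcs :: "'a list \<Rightarrow> ('a \<times> 'a) set" where
  "path_arcs vs = set (zip vs (tl vs))"

definition is_path :: "('a \<times> 'a) set \<Rightarrow> 'a list \<Rightarrow> bool" where
  "is_path A vs \<longleftrightarrow> vs \<noteq> [] \<and> distinct vs \<and> path_arcs vs \<subseteq> A"

definition path_length :: "'a list \<Rightarrow> nat" where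
  "path_length vs = length vs - 1"

definition cycle_arcs :: "'a list \<Rightarrow> ('a \<times> 'a) set" where
  "cycle_arcs vs = set (zip vs (tl vs @ [hd vs]))"

definition is_cycle :: "('a \<times> 'a) set \<Rightarrow> 'a list \<Rightarrow> bool" where
  "is_cycle A vs \<longleftrightarrow> length vs \<ge> 2 \<and> distinct vs \<and> cycle_arcs vs \<subseteq> A"

definition cycle_length :: "'a list \<Rightarrow> nat" where
  "cycle_length vs = length vs"

definition path_ear :: "('a \<times> 'a) set \<Rightarrow> 'a set \<Rightarrow> 'a list \<Rightarrow> bool" where
  "path_ear A W vs \<longleftrightarrow> is_path A vs \<and> hd vs \<in> W \<and> last vs \<in> W
     \<and> (\<forall>v \<in> set (butlast (tl vs)). v \<notin> W)"

definition cycle_ear :: "('a \<times> 'a) set \<Rightarrow> 'a set \<Rightarrow> 'a list \<Rightarrow> bool" where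
  "cycle_ear A W vs \<longleftrightarrow> is_cycle A vs \<and> card (set vs \<inter> W) = 1"

text \<open>ear_reach V A i W B: (W, B) is some D_j of an ear decomposition of D = (V, A)
  whose ears all have length at least i.\<close>

inductive ear_reach :: "'a set \<Rightarrow> ('a \<times> 'a) set \<Rightarrow> nat \<Rightarrow> 'a set \<Rightarrow> ('a \<times> 'a) set \<Rightarrow> bool"
  for V A i where
  base: "is_cycle A C \<Longrightarrow> ear_reach V A i (set C) (cycle_arcs C)"
| step_path: "ear_reach V A i W B \<Longrightarrow> path_ear A W P \<Longrightarrow> path_length P \<ge> i
     \<Longrightarrow> strong (W \<union> set P) (B \<union> path_arcs P)
     \<Longrightarrow> ear_reach V A i (W \<union> set P) (B \<union> path_arcs P)"
| step_cycle: "ear_reach V A i W B \<Longrightarrow> cycle_ear A W P \<Longrightarrow> cycle_length P \<ge> i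
     \<Longrightarrow> strong (W \<union> set P) (B \<union> cycle_arcs P)
     \<Longrightarrow> ear_reach V A i (W \<union> set P) (B \<union> cycle_arcs P)"

definition LE :: "nat \<Rightarrow> 'a set \<Rightarrow> ('a \<times> 'a) set \<Rightarrow> bool" where
  "LE i V A \<longleftrightarrow> strong V A \<and> ear_reach V A i V A"

definition proper_colouring :: "'a set \<Rightarrow> ('a \<times> 'a) set \<Rightarrow> nat \<Rightarrow> ('a \<Rightarrow> nat) \<Rightarrow> bool" where
  "proper_colouring V A k c \<longleftrightarrow> (\<forall>v\<in>V. c v < k) \<and> (\<forall>(x, y)\<in>A. c x \<noteq> c y)"

definition chromatic_number :: "'a set \<Rightarrow> ('a \<times> 'a) set \<Rightarrow> nat" where
  "chromatic_number V A = (LEAST k. \<exists>c. proper_colouring V A k c)"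

end

theory Submission
  imports Defs
begin

text \<open>An ear of length at least 2 has an internal vertex. With three colours, the internal
  vertices of a path whose two ends are already coloured can be coloured one by one, each
  avoiding the colour of its predecessor and the last one also that of the final end; this
  fails only for a single arc between equally coloured ends. Hence a 3-colouring extends
  along every ear of the decomposition, starting from the initial cycle.\<close>

lemma path_arcs_Cons_Cons: "path_arcs (a # x # xs) = insert (a, x) (path_arcs (x # xs))"
  by (simp add: path_arcs_def)

lemma path_arcs_subset: "path_arcs P \<subseteq> set P \<times> set P"
  unfolding path_arcs_def by (cases P) (auto dest: set_zip_leftD set_zip_rightD)

lemma cycle_arcs_Cons: "cycle_arcs (w # xs) = path_arcs (w # xs @ [w])"
proof -
  have "zip ((w # xs) @ [w]) (xs @ [w]) = zip (w # xs) (xs @ [w])"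
    by (simp only: zip_append1) simp
  then show ?thesis by (simp add: cycle_arcs_def path_arcs_def)
qed

lemma cycle_arcs_subset: "cycle_arcs C \<subseteq> set C \<times> set C"
proof (cases C)
  case (Cons w xs)
  then show ?thesis using path_arcs_subset[of "w # xs @ [w]"] by (auto simp: cycle_arcs_Cons)
qed (simp add: cycle_arcs_def)

lemma cycle_arcs_rotate1: "cycle_arcs (rotate1 C) = cycle_arcs C"
proof (cases C)
  case (Cons a t)
  show ?thesis
  proof (cases t)
    case (Cons b s)
    have "zip (b # s @ [a]) (s @ [a] @ [b]) = zip (b # s) (s @ [a]) @ [(a, b)]"
      using zip_append[of "b # s" "s @ [a]" "[a]" "[b]"] by simp
    then show ?thesis using Cons \<open>C = a # t\<close> by (auto simp: cycle_arcs_def)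
  qed (use Cons in simp)
qed simp

lemma cycle_arcs_rotate: "cycle_arcs (rotate n C) = cycle_arcs C"
  by (induction n) (auto simp: cycle_arcs_rotate1)

lemma chromatic_number_le:
  assumes "proper_colouring V A k c"
  shows "chromatic_number V A \<le> k"
  unfolding chromatic_number_def using assms by (auto intro: Least_le)

lemma proper_colouring_path_interior:
  assumes "3 \<le> k" "distinct xs" "xs \<noteq> []" "a \<notin> set xs" "b \<notin> set xs" "c a < k" "c b < k"
  shows "\<exists>c'. (\<forall>v. v \<notin> set xs \<longrightarrow> c' v = c v)
           \<and> proper_colouring (set xs) (path_arcs (a # xs @ [b])) k c'"
  using assms(2-)
proof (induction xs arbitrary: a c)
  case Nil
  then show ?case by simp
next
  case (Cons x r)
  show ?case
  proof (cases r)
    case Nil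
    obtain j :: nat where j: "j < 3" "j \<noteq> c a" "j \<noteq> c b"
    proof -
      have "{0, 1, 2} - {c a, c b} \<noteq> {}"
        by (cases "c a = 0"; cases "c a = 1") auto
      then obtain j where "j \<in> {0, 1, 2} - {c a, c b}"
        by blast
      then show ?thesis
        by (intro that[of j]) auto
    qed
    then show ?thesis
      using Cons.prems Nil assms(1)
      by (intro exI[of _ "c(x := j)"]) (auto simp: proper_colouring_def path_arcs_def)
  next
    case (Cons y s)
    define j :: nat where "j = (if c a = 0 then 1 else 0)"
    have j: "j < k" "j \<noteq> c a"
      using assms(1) by (auto simp: j_def)
    obtain c' where agree: "\<forall>v. v \<notin> set r \<longrightarrow> c' v = (c(x := j)) v"
      and proper: "proper_colouring (set r) (path_arcs (x # r @ [b])) k c'"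
      using Cons.IH[of x "c(x := j)"] Cons.prems Cons j by auto
    have "c' x \<noteq> c' a"
      using agree Cons.prems j by auto
    then show ?thesis
      using agree proper j Cons.prems \<open>r = y # s\<close>
      by (intro exI[of _ c']) (auto simp: proper_colouring_def path_arcs_Cons_Cons)
  qed
qed

lemma proper_colouring_add_ear:
  assumes "3 \<le> k" "proper_colouring W B k c" "B \<subseteq> W \<times> W"
    and "a \<in> W" "b \<in> W" "distinct xs" "xs \<noteq> []" "set xs \<inter> W = {}"
  shows "\<exists>c'. proper_colouring (W \<union> set xs) (B \<union> path_arcs (a # xs @ [b])) k c'"
proof -
  have "c a < k" "c b < k"
    using assms(2,4,5) by (auto simp: proper_colouring_def)
  then obtain c' where agree: "\<forall>v. v \<notin> set xs \<longrightarrow> c' v = c v"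
    and ear: "proper_colouring (set xs) (path_arcs (a # xs @ [b])) k c'"
    using proper_colouring_path_interior[OF assms(1,6,7)] assms(4,5,8) by blast
  have "\<forall>v\<in>W. c' v = c v"
    using agree assms(8) by blast
  then have "proper_colouring W B k c'"
    using assms(2,3) by (fastforce simp: proper_colouring_def)
  then show ?thesis
    using ear by (auto simp: proper_colouring_def)
qed

lemma is_cycle_ConsE:
  assumes "is_cycle A C"
  obtains w xs where "C = w # xs" "xs \<noteq> []" "distinct (w # xs)"
  using assms unfolding is_cycle_def by (cases C; cases "tl C") auto

lemma path_earE:
  assumes "path_ear A W P" "2 \<le> path_length P"
  obtains a b xs where "P = a # xs @ [b]" "a \<in> W" "b \<in> W" "distinct (a # xs @ [b])"
    "xs \<noteq> []" "set xs \<inter> W = {}"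
proof -
  obtain a u where au: "P = a # u" "u \<noteq> []"
    using assms(2) by (cases P) (force simp: path_length_def)+
  obtain xs b where "u = xs @ [b]"
    using au(2) by (metis append_butlast_last_id)
  moreover have "xs \<noteq> []"
    using assms(2) au calculation by (auto simp: path_length_def)
  ultimately show ?thesis
    using assms(1) au that by (auto simp: path_ear_def is_path_def)
qed

lemma cycle_earE:
  assumes "cycle_ear A W C"
  obtains w xs where "cycle_arcs C = path_arcs (w # xs @ [w])" "set C = insert w (set xs)"
    "w \<in> W" "distinct (w # xs)" "xs \<noteq> []" "set xs \<inter> W = {}"
proof -
  obtain w where w: "set C \<inter> W = {w}"
    using assms unfolding cycle_ear_def by (meson card_1_singletonE)
  then obtain j where j: "j < length C" "C ! j = w"
    by (metis Int_iff in_set_conv_nth insertI1)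
  define R where "R = rotate j C"
  have R: "is_cycle (cycle_arcs C) R" "set R = set C" "cycle_arcs R = cycle_arcs C"
    using assms by (auto simp: cycle_ear_def R_def is_cycle_def cycle_arcs_rotate)
  obtain v xs where Rv: "R = v # xs" "xs \<noteq> []" "distinct (v # xs)"
    using is_cycle_ConsE[OF R(1)] .
  have "v = hd R"
    using Rv by simp
  also have "hd R = C ! j"
  proof -
    have "C \<noteq> []"
      using j(1) by auto
    then show ?thesis
      using j(1) by (simp add: R_def hd_rotate_conv_nth)
  qed
  finally have "v = w"
    using j by simp
  then have "set xs \<inter> W = {}"
    using R(2) Rv w by auto
  with \<open>v = w\<close> show ?thesis
    using R Rv w by (intro that[of w xs]) (auto simp: cycle_arcs_Cons)
qed

lemma ear_reach_arcs_subset: "ear_reach V A i W B \<Longrightarrow> B \<subseteq> W \<times> W"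
  by (induction rule: ear_reach.induct)
    (use cycle_arcs_subset path_arcs_subset in fastforce)+

lemma ear_reach_proper_colouring:
  assumes "ear_reach V A i W B" "2 \<le> i" "3 \<le> k"
  shows "\<exists>c. proper_colouring W B k c"
  using assms(1,2)
proof (induction rule: ear_reach.induct)
  case (base C)
  then obtain w xs where C: "C = w # xs" "xs \<noteq> []" "distinct (w # xs)"
    by (auto elim: is_cycle_ConsE)
  have "proper_colouring {w} {} k (\<lambda>_. 0)"
    using assms(3) by (simp add: proper_colouring_def)
  from proper_colouring_add_ear[OF assms(3) this] C
  show ?case by (auto simp: cycle_arcs_Cons)
next
  case (step_path W B P)
  obtain a b xs where P: "P = a # xs @ [b]" "a \<in> W" "b \<in> W" "distinct (a # xs @ [b])"
    "xs \<noteq> []" "set xs \<inter> W = {}"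
    using step_path.hyps(2,3) step_path.prems by (auto elim: path_earE)
  obtain c where "proper_colouring W B k c"
    using step_path.IH step_path.prems by blast
  from proper_colouring_add_ear[OF assms(3) this ear_reach_arcs_subset[OF step_path.hyps(1)]] P
  have "\<exists>c'. proper_colouring (W \<union> set xs) (B \<union> path_arcs P) k c'"
    by simp
  moreover have "W \<union> set P = W \<union> set xs"
    using P by auto
  ultimately show ?case
    by simp
next
  case (step_cycle W B C)
  obtain w xs where C: "cycle_arcs C = path_arcs (w # xs @ [w])" "set C = insert w (set xs)"
    "w \<in> W" "distinct (w # xs)" "xs \<noteq> []" "set xs \<inter> W = {}"
    using step_cycle.hyps(2) by (auto elim: cycle_earE)
  obtain c where "proper_colouring W B k c"
    using step_cycle.IH step_cycle.prems by blast
  from proper_colouring_add_ear[OF assms(3) this ear_reach_arcs_subset[OF step_cycle.hyps(1)]] C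
  have "\<exists>c'. proper_colouring (W \<union> set xs) (B \<union> cycle_arcs C) k c'"
    by simp
  moreover have "W \<union> set C = W \<union> set xs"
    using C by auto
  ultimately show ?case
    by simp
qed

theorem mainTheorem14:
  fixes V :: "'a set" and A :: "('a \<times> 'a) set"
  assumes "digraph V A" and "strong V A" and "LE 2 V A"
  shows "chromatic_number V A \<le> 3"
proof -
  have "ear_reach V A 2 V A"
    using assms(3) unfolding LE_def by simp
  then obtain c where "proper_colouring V A 3 c"
    using ear_reach_proper_colouring by blast
  then show ?thesis
    by (rule chromatic_number_le)
qed

end
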